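(* Let $(C_k)_{k\in\mathbb{N}}$ be a sequence of bivariate copulas satisfying the standing assumption below, and suppose every $C_k$ is exchangeable, i.e. $C_k(u,v)=C_k(v,u)$ for all $u,v\in(0,1)$. Then: (i) for every $k\in\mathbb{N}$ and all $(\mathbf{u},x)\in(0,1)^k\times(0,1)$ the Rosenblatt functions satisfy $R^{(2)}_k(\overline{\mathbf{u}},x)=R^{(1)}_k(\mathbf{u},x)$; (ii) the s-vine copula process associated with $(C_k)_{k\in\mathbb{N}}$ is reversible, i.e. for every $n\ge 2$ the $n$-dimensional copula satisfies $C_{(n)}(\mathbf{u})=C_{(n)}(\overline{\mathbf{u}})$ for all $\mathbf{u}\in(0,1)^n$.
   Context: Standing assumption: each bivariate copula $C_k$ is $C^\infty$ on $(0,1)^2$ and has a density $c_k$ that is strictly positive on $(0,1)^2$. Write $h_k^{(1)}(u_1,u_2)=\partial C_k(u_1,u_2)/\partial u_1$ and $h_k^{(2)}(u_1,u_2)=\partial C_k(u_1,u_2)/\partial u_2$. For $\mathbf{u}=(u_1,\dots,u_k)^\top$, $\mathbf{u}_{-i}$ denotes $\mathbf{u}$ with its $i$th component removed, $\mathbf{u}_{[a,b]}=(u_a,\dots,u_b)^\top$, and $\overline{\mathbf{u}}=(u_k,\dots,u_1)^\top$ is the reversed vector. The forward and backward Rosenblatt functions $R^{(1)}_k,R^{(2)}_k:(0,1)^k\times(0,1)\to(0,1)$ are defined by $R^{(1)}_1(u,x)=h_1^{(1)}(u,x)$, $R^{(2)}_1(u,x)=h_1^{(2)}(x,u)$ and,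 for $k\ge 2$, $R^{(1)}_k(\mathbf{u},x)=h_k^{(1)}\big(R^{(2)}_{k-1}(\mathbf{u}_{-1},u_1),R^{(1)}_{k-1}(\mathbf{u}_{-1},x)\big)$, $R^{(2)}_k(\mathbf{u},x)=h_k^{(2)}\big(R^{(2)}_{k-1}(\mathbf{u}_{-k},x),R^{(1)}_{k-1}(\mathbf{u}_{-k},u_k)\big)$; by convention $R^{(1)}_0(\cdot,u)=R^{(2)}_0(\cdot,u)=u$. For $n\ge2$, $C_{(n)}$ is the $n$-dimensional copula with density $c_{(n)}(u_1,\dots,u_n)=\prod_{k=1}^{n-1}\prod_{j=k+1}^{n}c_k\big(R^{(2)}_{k-1}(\mathbf{u}_{[j-k+1,j-1]},u_{j-k}),R^{(1)}_{k-1}(\mathbf{u}_{[j-k+1,j-1]},u_j)\big)$. An s-vine copula process associated with $(C_k)$ is a strictly stationary process $(U_t)_{t\in\mathbb{Z}}$ with standard uniform margins such that for every $t$ and $n\ge2$, $(U_t,\dots,U_{t+n-1})$ has distribution function $C_{(n)}$. *)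

theory Defs
  imports "HOL-Analysis.Analysis" "HOL-Probability.Probability"
begin

definition is_copula2 :: "(real \<Rightarrow> real \<Rightarrow> real) \<Rightarrow> bool" where
  "is_copula2 C \<longleftrightarrow>
     (\<forall>u\<in>{0..1}. C u 0 = 0 \<and> C 0 u = 0 \<and> C u 1 = u \<and> C 1 u = u) \<and>
     (\<forall>u1 u2 v1 v2. 0 \<le> u1 \<and> u1 \<le> u2 \<and> u2 \<le> 1 \<and> 0 \<le> v1 \<and> v1 \<le> v2 \<and> v2 \<le> 1 \<longrightarrow>
        C u2 v2 - C u2 v1 - C u1 v2 + C u1 v1 \<ge> 0)"

definition pd1 :: "(real \<Rightarrow> real \<Rightarrow> real) \<Rightarrow> real \<Rightarrow> real \<Rightarrow> real" where
  "pd1 f u v = deriv (\<lambda>s. f s v) u"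

definition pd2 :: "(real \<Rightarrow> real \<Rightarrow> real) \<Rightarrow> real \<Rightarrow> real \<Rightarrow> real" where
  "pd2 f u v = deriv (\<lambda>s. f u s) v"

fun iter_pd :: "bool list \<Rightarrow> (real \<Rightarrow> real \<Rightarrow> real) \<Rightarrow> real \<Rightarrow> real \<Rightarrow> real" where
  "iter_pd [] f = f"
| "iter_pd (b # bs) f = (if b then pd1 else pd2) (iter_pd bs f)"

definition smooth_on_unit_sq :: "(real \<Rightarrow> real \<Rightarrow> real) \<Rightarrow> bool" where
  "smooth_on_unit_sq f \<longleftrightarrow>
     (\<forall>ds. \<forall>u\<in>{0<..<1}. \<forall>v\<in>{0<..<1}.
        (\<lambda>p. iter_pd ds f (fst p) (snd p)) differentiable (at (u, v)))"

definition copula_density :: "(real \<Rightarrow> real \<Rightarrow> real) \<Rightarrow> real \<Rightarrow> real \<Rightarrow> real" where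
  "copula_density f = pd2 (pd1 f)"

definition h1 :: "(nat \<Rightarrow> real \<Rightarrow> real \<Rightarrow> real) \<Rightarrow> nat \<Rightarrow> real \<Rightarrow> real \<Rightarrow> real" where
  "h1 C k = pd1 (C k)"

definition h2 :: "(nat \<Rightarrow> real \<Rightarrow> real \<Rightarrow> real) \<Rightarrow> nat \<Rightarrow> real \<Rightarrow> real \<Rightarrow> real" where
  "h2 C k = pd2 (C k)"

text \<open>Rosenblatt functions: rosen C True k u x = R^(1)_k(u,x),
  rosen C False k u x = R^(2)_k(u,x); the vector u is a list of length k.
  For k = 1 the general recursion reduces to R^(1)_1(u,x) = h_1^(1)(u,x),
  R^(2)_1(u,x) = h_1^(2)(x,u) by the convention R_0(.,u) = u.\<close>
fun rosen :: "(nat \<Rightarrow> real \<Rightarrow> real \<Rightarrow> real) \<Rightarrow> bool \<Rightarrow> nat \<Rightarrow> real list \<Rightarrow> real \<Rightarrow> real" where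
  "rosen C b 0 u x = x"
| "rosen C True (Suc k) u x =
     h1 C (Suc k) (rosen C False k (tl u) (hd u)) (rosen C True k (tl u) x)"
| "rosen C False (Suc k) u x =
     h2 C (Suc k) (rosen C False k (butlast u) x) (rosen C True k (butlast u) (last u))"

text \<open>Density c_(n) of the n-dimensional s-vine copula, n = length u (1-based
  component u_i is u ! (i-1); u_[j-k+1, j-1] = take (k-1) (drop (j-k) u)).\<close>
definition svine_density :: "(nat \<Rightarrow> real \<Rightarrow> real \<Rightarrow> real) \<Rightarrow> real list \<Rightarrow> real" where
  "svine_density C u =
     (\<Prod>k\<in>{1..<length u}. \<Prod>j\<in>{k+1..length u}.
        copula_density (C k)
          (rosen C False (k - 1) (take (k - 1) (drop (j - k) u)) (u ! (j - k - 1)))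
          (rosen C True (k - 1) (take (k - 1) (drop (j - k) u)) (u ! (j - 1))))"

text \<open>The n-dimensional copula C_(n) (distribution function with density c_(n)),
  evaluated at u (n = length u): integral of c_(n) over the box (0,u].\<close>
definition svine_cdf :: "(nat \<Rightarrow> real \<Rightarrow> real \<Rightarrow> real) \<Rightarrow> real list \<Rightarrow> ennreal" where
  "svine_cdf C u =
     (\<integral>\<^sup>+ x. indicator {x. \<forall>i<length u. x i \<in> {0<..u ! i}} x *
              ennreal (svine_density C (map x [0..<length u]))
        \<partial>(PiM {..<length u} (\<lambda>_. lborel)))"

end

theory Submission
  imports Defs
begin

(* Exchangeability gives h_k^(2)(p, q) = h_k^(1)(q, p), so the recursions defining the
   backward and forward Rosenblatt functions are exchanged by reversing the vector, and
   (i) follows by induction on k.  Exchangeability together with the symmetry of mixed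
   partial derivatives also makes every density c_k symmetric.  Hence, by (i), the factor
   of c_(n) at the reversed vector with indices (k, j) equals the factor of c_(n) with
   indices (k, n + 1 + k - j), so c_(n) is invariant under reversal; (ii) follows because
   reversing the coordinates preserves Lebesgue measure on R^n. *)

lemma deriv_cong_on_open:
  assumes "open S" "x \<in> S" "\<And>y. y \<in> S \<Longrightarrow> f y = g y"
  shows "deriv f x = deriv g x"
  using eventually_nhds_in_open[OF assms(1,2)]
  by (intro deriv_cong_ev) (auto elim!: eventually_mono simp: assms(3))

lemma eventually_at_unit_interval:
  "(u::real) \<in> {0<..<1} \<Longrightarrow> eventually (\<lambda>s. s \<in> {0<..<1} - {u}) (at u)"
  by (rule eventually_at_in_open) (auto simp: open_greaterThanLessThan)

lemma partial_derivatives: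
  fixes F :: "real \<Rightarrow> real \<Rightarrow> real"
  assumes "(\<lambda>z. F (fst z) (snd z)) differentiable (at (s, t))"
  shows "DERIV (\<lambda>x. F x t) s :> pd1 F s t" and "DERIV (\<lambda>y. F s y) t :> pd2 F s t"
proof -
  have "(\<lambda>x. (x, t)) differentiable (at s)" "(\<lambda>y. (s, y)) differentiable (at t)"
    by (auto intro!: derivative_intros simp: differentiable_def)
  then have "(\<lambda>z. F (fst z) (snd z)) \<circ> (\<lambda>x. (x, t)) differentiable (at s)"
    and "(\<lambda>z. F (fst z) (snd z)) \<circ> (\<lambda>y. (s, y)) differentiable (at t)"
    using assms by (auto intro!: differentiable_chain_at)
  then have "(\<lambda>x. F x t) differentiable (at s)" "(\<lambda>y. F s y) differentiable (at t)"
    by (simp_all add: o_def)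
  then show "DERIV (\<lambda>x. F x t) s :> pd1 F s t" "DERIV (\<lambda>y. F s y) t :> pd2 F s t"
    unfolding pd1_def pd2_def DERIV_deriv_iff_real_differentiable by blast+
qed

lemma mixed_partials_mean_value:
  fixes F :: "real \<Rightarrow> real \<Rightarrow> real"
  assumes h: "0 < h" and box: "{p..p+h} \<times> {q..q+h} \<subseteq> S"
    and D1: "\<And>x y. (x, y) \<in> S \<Longrightarrow> DERIV (\<lambda>x. F x y) x :> pd1 F x y"
    and D2: "\<And>x y. (x, y) \<in> S \<Longrightarrow> DERIV (\<lambda>y. F x y) y :> pd2 F x y"
    and D12: "\<And>x y. (x, y) \<in> S \<Longrightarrow> DERIV (\<lambda>y. pd1 F x y) y :> pd2 (pd1 F) x y"
    and D21: "\<And>x y. (x, y) \<in> S \<Longrightarrow> DERIV (\<lambda>x. pd2 F x y) x :> pd1 (pd2 F) x y"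
  obtains x y x' y' where "x \<in> {p<..<p+h}" "y \<in> {q<..<q+h}" "x' \<in> {p<..<p+h}" "y' \<in> {q<..<q+h}"
    and "pd2 (pd1 F) x y = pd1 (pd2 F) x' y'"
proof -
  have inS: "(a, b) \<in> S" if "p \<le> a" "a \<le> p + h" "q \<le> b" "b \<le> q + h" for a b
    using box that by auto
  txt \<open>Expand the second difference of F over the box by the mean value theorem,
    first in x and then in y, and the other way round.\<close>
  have "\<exists>x. p < x \<and> x < p + h \<and> (\<lambda>s. F s (q+h) - F s q) (p+h) - (\<lambda>s. F s (q+h) - F s q) p
          = (p + h - p) * (\<lambda>s. pd1 F s (q+h) - pd1 F s q) x"
    by (rule MVT2) (use h in \<open>auto intro!: DERIV_diff D1 inS\<close>)
  then obtain x where x: "p < x" "x < p + h"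
    and "(F (p+h) (q+h) - F (p+h) q) - (F p (q+h) - F p q) = h * (pd1 F x (q+h) - pd1 F x q)"
    by auto
  moreover have "\<exists>y. q < y \<and> y < q + h \<and> pd1 F x (q+h) - pd1 F x q = (q + h - q) * pd2 (pd1 F) x y"
    by (rule MVT2) (use h x in \<open>auto intro!: D12 inS\<close>)
  then obtain y where "q < y" "y < q + h" and "pd1 F x (q+h) - pd1 F x q = h * pd2 (pd1 F) x y"
    by auto
  moreover have "\<exists>y'. q < y' \<and> y' < q + h \<and> (\<lambda>t. F (p+h) t - F p t) (q+h) - (\<lambda>t. F (p+h) t - F p t) q
          = (q + h - q) * (\<lambda>t. pd2 F (p+h) t - pd2 F p t) y'"
    by (rule MVT2) (use h in \<open>auto intro!: DERIV_diff D2 inS\<close>)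
  then obtain y' where y': "q < y'" "y' < q + h"
    and "(F (p+h) (q+h) - F p (q+h)) - (F (p+h) q - F p q) = h * (pd2 F (p+h) y' - pd2 F p y')"
    by auto
  moreover have "\<exists>x'. p < x' \<and> x' < p + h \<and> pd2 F (p+h) y' - pd2 F p y' = (p + h - p) * pd1 (pd2 F) x' y'"
    by (rule MVT2) (use h y' in \<open>auto intro!: D21 inS\<close>)
  then obtain x' where "p < x'" "x' < p + h" and "pd2 F (p+h) y' - pd2 F p y' = h * pd1 (pd2 F) x' y'"
    by auto
  ultimately show ?thesis
    using that h by (auto simp: algebra_simps)
qed

theorem pd2_pd1_eq_pd1_pd2:
  fixes F :: "real \<Rightarrow> real \<Rightarrow> real"
  assumes "open S" "(p, q) \<in> S"
    and D1: "\<And>x y. (x, y) \<in> S \<Longrightarrow> DERIV (\<lambda>x. F x y) x :> pd1 F x y"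
    and D2: "\<And>x y. (x, y) \<in> S \<Longrightarrow> DERIV (\<lambda>y. F x y) y :> pd2 F x y"
    and D12: "\<And>x y. (x, y) \<in> S \<Longrightarrow> DERIV (\<lambda>y. pd1 F x y) y :> pd2 (pd1 F) x y"
    and D21: "\<And>x y. (x, y) \<in> S \<Longrightarrow> DERIV (\<lambda>x. pd2 F x y) x :> pd1 (pd2 F) x y"
    and cont12: "continuous (at (p, q)) (\<lambda>z. pd2 (pd1 F) (fst z) (snd z))"
    and cont21: "continuous (at (p, q)) (\<lambda>z. pd1 (pd2 F) (fst z) (snd z))"
  shows "pd2 (pd1 F) p q = pd1 (pd2 F) p q"
proof -
  define A where "A = (\<lambda>z. pd2 (pd1 F) (fst z) (snd z))"
  define B where "B = (\<lambda>z. pd1 (pd2 F) (fst z) (snd z))"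
  have close: "\<bar>A (p, q) - B (p, q)\<bar> < 2 * e" if e: "e > 0" for e
  proof -
    obtain d1 where d1: "d1 > 0" "\<And>z. dist z (p, q) < d1 \<Longrightarrow> dist (A z) (A (p, q)) < e"
      using cont12 e unfolding continuous_at_eps_delta A_def by blast
    obtain d2 where d2: "d2 > 0" "\<And>z. dist z (p, q) < d2 \<Longrightarrow> dist (B z) (B (p, q)) < e"
      using cont21 e unfolding continuous_at_eps_delta B_def by blast
    obtain r where r: "r > 0" "ball (p, q) r \<subseteq> S"
      using assms(1,2) open_contains_ball by blast
    define h where "h = min r (min d1 d2) / 4"
    have h: "0 < h" "2 * h < r" "2 * h < d1" "2 * h < d2"
      using r d1 d2 by (auto simp: h_def)
    have near: "dist (a, b) (p, q) \<le> 2 * h" if "a \<in> {p..p+h}" "b \<in> {q..q+h}" for a b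
    proof -
      have "dist (a, b) (p, q) \<le> \<bar>a - p\<bar> + \<bar>b - q\<bar>"
        using norm_Pair_le[of "a - p" "b - q"] by (simp add: dist_norm)
      then show ?thesis using that by auto
    qed
    have box: "{p..p+h} \<times> {q..q+h} \<subseteq> S"
    proof
      fix z assume "z \<in> {p..p+h} \<times> {q..q+h}"
      then have "dist (p, q) z < r"
        using near[of "fst z" "snd z"] h by (auto simp: dist_commute)
      then show "z \<in> S" using r by auto
    qed
    obtain x y x' y' where xy: "x \<in> {p<..<p+h}" "y \<in> {q<..<q+h}" "x' \<in> {p<..<p+h}" "y' \<in> {q<..<q+h}"
      and "pd2 (pd1 F) x y = pd1 (pd2 F) x' y'"
      by (rule mixed_partials_mean_value[OF h(1) box D1 D2 D12 D21])
    then have eq: "A (x, y) = B (x', y')" unfolding A_def B_def by simp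
    have "dist (x, y) (p, q) < d1" "dist (x', y') (p, q) < d2"
      using near[of x y] near[of x' y'] xy h by auto
    then have "dist (A (x, y)) (A (p, q)) < e" "dist (B (x', y')) (B (p, q)) < e"
      using d1(2) d2(2) by blast+
    then show ?thesis using eq by (simp add: dist_real_def)
  qed
  show ?thesis
    using close[of "\<bar>A (p, q) - B (p, q)\<bar> / 2"] unfolding A_def B_def by fastforce
qed

locale copula2 =
  fixes C :: "real \<Rightarrow> real \<Rightarrow> real"
  assumes is_copula2: "is_copula2 C"
begin

lemma margins:
  assumes "u \<in> {0..1}"
  shows "C u 0 = 0" "C 0 u = 0" "C u 1 = u" "C 1 u = u"
  using is_copula2 assms unfolding is_copula2_def by auto

lemma rectangle_nonneg:
  assumes "0 \<le> u1" "u1 \<le> u2" "u2 \<le> 1" "0 \<le> v1" "v1 \<le> v2" "v2 \<le> 1"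
  shows "C u2 v2 - C u2 v1 - C u1 v2 + C u1 v1 \<ge> 0"
  using is_copula2 assms unfolding is_copula2_def by blast

lemma difference_quotient_mono:
  assumes "u \<in> {0..1}" "s \<in> {0..1}" "s \<noteq> u" "0 \<le> v'" "v' \<le> v" "v \<le> 1"
  shows "(C s v' - C u v') / (s - u) \<le> (C s v - C u v) / (s - u)"
proof (cases "u < s")
  case True
  then show ?thesis
    using rectangle_nonneg[of u s v' v] assms by (auto intro!: divide_right_mono)
next
  case False
  then show ?thesis
    using rectangle_nonneg[of s u v' v] assms by (auto intro!: divide_right_mono_neg)
qed

lemma difference_quotient_bounds:
  assumes "u \<in> {0..1}" "s \<in> {0..1}" "s \<noteq> u" "v \<in> {0..1}"
  shows "0 \<le> (C s v - C u v) / (s - u)" "(C s v - C u v) / (s - u) \<le> 1"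
  using difference_quotient_mono[of u s 0 v] difference_quotient_mono[of u s v 1] assms
  by (auto simp: margins)

end

locale smooth_copula = copula2 +
  assumes smooth: "smooth_on_unit_sq C"
    and density_pos: "\<And>u v. u \<in> {0<..<1} \<Longrightarrow> v \<in> {0<..<1} \<Longrightarrow> copula_density C u v > 0"
begin

lemma iter_pd_differentiable:
  "u \<in> {0<..<1} \<Longrightarrow> v \<in> {0<..<1} \<Longrightarrow>
    (\<lambda>z. iter_pd ds C (fst z) (snd z)) differentiable (at (u, v))"
  using smooth unfolding smooth_on_unit_sq_def by blast

lemma has_field_derivative_pd1:
  "u \<in> {0<..<1} \<Longrightarrow> v \<in> {0<..<1} \<Longrightarrow> DERIV (\<lambda>x. C x v) u :> pd1 C u v"
  using partial_derivatives(1)[OF iter_pd_differentiable[of u v "[]"]] by simp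

lemma difference_quotient_tendsto_pd1:
  assumes "u \<in> {0<..<1}" "v \<in> {0<..<1}"
  shows "((\<lambda>s. (C s v - C u v) / (s - u)) \<longlongrightarrow> pd1 C u v) (at u)"
  using has_field_derivative_pd1[OF assms] by (simp add: has_field_derivative_iff)

lemma pd1_bounds:
  assumes u: "u \<in> {0<..<1}" and v: "v \<in> {0<..<1}"
  shows "0 \<le> pd1 C u v" "pd1 C u v \<le> 1"
proof -
  have "eventually (\<lambda>s. 0 \<le> (C s v - C u v) / (s - u) \<and> (C s v - C u v) / (s - u) \<le> 1) (at u)"
    using eventually_at_unit_interval[OF u]
    by eventually_elim (use u v difference_quotient_bounds in auto)
  then show "0 \<le> pd1 C u v" "pd1 C u v \<le> 1"
    using difference_quotient_tendsto_pd1[OF u v]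
    by (auto intro: tendsto_lowerbound tendsto_upperbound elim: eventually_mono)
qed

lemma pd1_mono:
  assumes u: "u \<in> {0<..<1}" and v: "v \<in> {0<..<1}" "v' \<in> {0<..<1}" "v' \<le> v"
  shows "pd1 C u v' \<le> pd1 C u v"
proof (rule tendsto_le[OF _ difference_quotient_tendsto_pd1 difference_quotient_tendsto_pd1])
  show "eventually (\<lambda>s. (C s v' - C u v') / (s - u) \<le> (C s v - C u v) / (s - u)) (at u)"
    using eventually_at_unit_interval[OF u]
    by eventually_elim (use u v difference_quotient_mono in auto)
qed (use u v in auto)

text \<open>If pd1 C u reached 0 or 1 at an interior point, monotonicity and the bounds
  would make it constant on an adjacent interval, where its derivative, the density,
  would vanish.\<close>
lemma pd1_strict_bounds:
  assumes u: "u \<in> {0<..<1}" and v: "v \<in> {0<..<1}"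
  shows "0 < pd1 C u v" "pd1 C u v < 1"
proof -
  have density_not_const: False
    if "open I" "t \<in> I" "I \<subseteq> {0<..<1}" "\<And>w. w \<in> I \<Longrightarrow> pd1 C u w = c" for I t c
  proof -
    have "copula_density C u t = deriv (\<lambda>_. c) t"
      unfolding copula_density_def pd2_def by (rule deriv_cong_on_open) (use that in auto)
    then show False using density_pos[OF u, of t] that by auto
  qed
  show "0 < pd1 C u v"
  proof (rule ccontr)
    assume "\<not> 0 < pd1 C u v"
    then have "pd1 C u w = 0" if "w \<in> {0<..<v}" for w
      using pd1_bounds[OF u, of w] pd1_mono[OF u v, of w] that v by force
    then show False
      by (intro density_not_const[of "{0<..<v}" "v/2"]) (use v in auto)
  qed
  show "pd1 C u v < 1"
  proof (rule ccontr)
    assume "\<not> pd1 C u v < 1"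
    then have "pd1 C u w = 1" if "w \<in> {v<..<1}" for w
      using pd1_bounds[OF u, of w] pd1_mono[OF u _ v, of w] that v by force
    then show False
      by (intro density_not_const[of "{v<..<1}" "(v+1)/2"]) (use v in auto)
  qed
qed

lemma copula_density_eq_pd1_pd2:
  assumes "p \<in> {0<..<1}" "q \<in> {0<..<1}"
  shows "copula_density C p q = pd1 (pd2 C) p q"
proof -
  let ?S = "{0<..<1} \<times> {0<..<1} :: (real \<times> real) set"
  have D: "(\<lambda>z. iter_pd ds C (fst z) (snd z)) differentiable (at (x, y))" if "(x, y) \<in> ?S" for ds x y
    using iter_pd_differentiable that by auto
  have "pd2 (pd1 C) p q = pd1 (pd2 C) p q"
  proof (rule pd2_pd1_eq_pd1_pd2[of ?S])
    show "open ?S" by (auto intro: open_Times)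
  qed (use assms partial_derivatives D[where ds="[]"] D[where ds="[True]"] D[where ds="[False]"]
         differentiable_imp_continuous_within[OF D[where ds="[False, True]"]]
         differentiable_imp_continuous_within[OF D[where ds="[True, False]"]] in auto)
  then show ?thesis unfolding copula_density_def .
qed

end

locale exchangeable_copula = smooth_copula +
  assumes exchangeable: "\<And>u v. u \<in> {0<..<1} \<Longrightarrow> v \<in> {0<..<1} \<Longrightarrow> C u v = C v u"
begin

lemma pd2_eq_pd1_swap:
  assumes "p \<in> {0<..<1}" "q \<in> {0<..<1}"
  shows "pd2 C p q = pd1 C q p"
  unfolding pd1_def pd2_def
  by (rule deriv_cong_on_open[of "{0<..<1}"]) (use assms exchangeable in auto)

lemma copula_density_symmetric:
  assumes p: "p \<in> {0<..<1}" and q: "q \<in> {0<..<1}"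
  shows "copula_density C p q = copula_density C q p"
proof -
  have "copula_density C p q = deriv (\<lambda>t. pd1 C p t) q"
    unfolding copula_density_def pd2_def ..
  also have "\<dots> = deriv (\<lambda>t. pd2 C t p) q"
    by (rule deriv_cong_on_open[of "{0<..<1}"]) (use p q pd2_eq_pd1_swap in auto)
  also have "\<dots> = copula_density C q p"
    using copula_density_eq_pd1_pd2[OF q p] unfolding pd1_def ..
  finally show ?thesis .
qed

end

lemma take_drop_rev:
  assumes "i + m \<le> length y"
  shows "take m (drop i (rev y)) = rev (take m (drop (length y - i - m) y))"
  using assms by (simp add: rev_take rev_drop drop_take min_def)

definition svine_factor :: "(nat \<Rightarrow> real \<Rightarrow> real \<Rightarrow> real) \<Rightarrow> real list \<Rightarrow> nat \<Rightarrow> nat \<Rightarrow> real" where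
  "svine_factor C u k j = copula_density (C k)
     (rosen C False (k - 1) (take (k - 1) (drop (j - k) u)) (u ! (j - k - 1)))
     (rosen C True (k - 1) (take (k - 1) (drop (j - k) u)) (u ! (j - 1)))"

lemma svine_density_eq_prod_factor:
  "svine_density C u = (\<Prod>k\<in>{1..<length u}. \<Prod>j\<in>{k+1..length u}. svine_factor C u k j)"
  unfolding svine_density_def svine_factor_def ..

context
  fixes C :: "nat \<Rightarrow> real \<Rightarrow> real \<Rightarrow> real"
  assumes exchangeable: "\<And>k. k \<ge> 1 \<Longrightarrow> exchangeable_copula (C k)"
begin

lemma h1_in_unit_interval:
  "k \<ge> 1 \<Longrightarrow> p \<in> {0<..<1} \<Longrightarrow> q \<in> {0<..<1} \<Longrightarrow> h1 C k p q \<in> {0<..<1}"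
  using smooth_copula.pd1_strict_bounds exchangeable exchangeable_copula.axioms(1)
  unfolding h1_def by fastforce

lemma h2_eq_h1_swap:
  "k \<ge> 1 \<Longrightarrow> p \<in> {0<..<1} \<Longrightarrow> q \<in> {0<..<1} \<Longrightarrow> h2 C k p q = h1 C k q p"
  using exchangeable_copula.pd2_eq_pd1_swap exchangeable unfolding h1_def h2_def by blast

lemma rosen_in_unit_interval:
  "length u = k \<Longrightarrow> set u \<subseteq> {0<..<1} \<Longrightarrow> x \<in> {0<..<1} \<Longrightarrow> rosen C b k u x \<in> {0<..<1}"
proof (induction k arbitrary: u x b)
  case 0
  then show ?case by simp
next
  case (Suc k)
  show ?case
  proof (cases b)
    case True
    obtain a w where u: "u = a # w" using Suc.prems(1) by (cases u) auto
    then have "rosen C False k w a \<in> {0<..<1}" "rosen C True k w x \<in> {0<..<1}"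
      using Suc by auto
    then show ?thesis using True u h1_in_unit_interval[of "Suc k"] by simp
  next
    case False
    obtain a w where u: "u = w @ [a]" using Suc.prems(1) by (cases u rule: rev_exhaust) auto
    then have "rosen C False k w x \<in> {0<..<1}" "rosen C True k w a \<in> {0<..<1}"
      using Suc by auto
    then show ?thesis using False u h1_in_unit_interval[of "Suc k"] h2_eq_h1_swap[of "Suc k"] by simp
  qed
qed

theorem rosen_rev:
  "length u = k \<Longrightarrow> set u \<subseteq> {0<..<1} \<Longrightarrow> x \<in> {0<..<1} \<Longrightarrow>
    rosen C False k (rev u) x = rosen C True k u x"
proof (induction k arbitrary: u x)
  case 0
  then show ?case by simp
next
  case (Suc k)
  obtain a w where u: "u = a # w" using Suc.prems(1) by (cases u) auto
  have w: "length w = k" "set w \<subseteq> {0<..<1}" "a \<in> {0<..<1}" using Suc.prems u by auto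
  have "rosen C False (Suc k) (rev u) x
      = h2 C (Suc k) (rosen C False k (rev w) x) (rosen C True k (rev w) a)"
    using u by simp
  also have "\<dots> = h2 C (Suc k) (rosen C True k w x) (rosen C False k w a)"
    using Suc.IH[of w x] Suc.IH[of "rev w" a] w Suc.prems by simp
  also have "\<dots> = h1 C (Suc k) (rosen C False k w a) (rosen C True k w x)"
    using w Suc.prems by (intro h2_eq_h1_swap rosen_in_unit_interval) auto
  also have "\<dots> = rosen C True (Suc k) u x" using u by simp
  finally show ?case .
qed

text \<open>Reversing the vector reverses the conditioning block of the factor (k, j) and
  moves it to the position of the factor (k, n + 1 + k - j); by rosen_rev this swaps
  the two arguments of the symmetric density c_k.\<close>
lemma svine_factor_rev:
  assumes y: "set y \<subseteq> {0<..<1}" and k: "1 \<le> k" "k < j" "j \<le> length y"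
  shows "svine_factor C (rev y) k j = svine_factor C y k (length y + 1 + k - j)"
proof -
  define j' where "j' = length y + 1 + k - j"
  define v where "v = take (k - 1) (drop (j' - k) y)"
  have block: "take (k - 1) (drop (j - k) (rev y)) = rev v"
    using take_drop_rev[of "j - k" "k - 1" y] k unfolding v_def j'_def by (simp add: algebra_simps)
  have lv: "length v = k - 1" and sv: "set v \<subseteq> {0<..<1}"
    using k y unfolding v_def j'_def by (auto dest: in_set_takeD in_set_dropD)
  have ends: "rev y ! (j - k - 1) = y ! (j' - 1)" "rev y ! (j - 1) = y ! (j' - k - 1)"
    using k unfolding j'_def by (simp_all add: rev_nth)
  have "j' - 1 < length y" "j' - k - 1 < length y"
    using k unfolding j'_def by auto
  then have ends_in: "y ! (j' - 1) \<in> {0<..<1}" "y ! (j' - k - 1) \<in> {0<..<1}"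
    using y by (meson nth_mem subsetD)+
  have "svine_factor C (rev y) k j = copula_density (C k)
      (rosen C True (k - 1) v (y ! (j' - 1))) (rosen C False (k - 1) v (y ! (j' - k - 1)))"
    unfolding svine_factor_def block ends
    using rosen_rev[OF lv sv ends_in(1)] rosen_rev[of "rev v" "k - 1" "y ! (j' - k - 1)"] lv sv ends_in(2)
    by simp
  also have "\<dots> = copula_density (C k)
      (rosen C False (k - 1) v (y ! (j' - k - 1))) (rosen C True (k - 1) v (y ! (j' - 1)))"
    using exchangeable k
    by (intro exchangeable_copula.copula_density_symmetric rosen_in_unit_interval lv sv ends_in) auto
  also have "\<dots> = svine_factor C y k j'" unfolding svine_factor_def v_def ..
  finally show ?thesis unfolding j'_def .
qed

lemma svine_density_rev:
  assumes "set y \<subseteq> {0<..<1}"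
  shows "svine_density C (rev y) = svine_density C y"
  unfolding svine_density_eq_prod_factor length_rev
proof (rule prod.cong[OF refl])
  fix k assume k: "k \<in> {1..<length y}"
  show "(\<Prod>j\<in>{k+1..length y}. svine_factor C (rev y) k j) = (\<Prod>j\<in>{k+1..length y}. svine_factor C y k j)"
    by (rule prod.reindex_bij_witness[where i="\<lambda>j. length y + 1 + k - j" and j="\<lambda>j. length y + 1 + k - j"])
      (use k assms svine_factor_rev in auto)
qed

end

text \<open>No measurability of f is needed: the integral is the supremum over simple
  functions below f, and the involution maps these onto each other.\<close>
lemma nn_integral_involution:
  assumes T: "T \<in> measurable M M" and D: "distr M M T = M" and I: "\<And>x. x \<in> space M \<Longrightarrow> T (T x) = x"
  shows "(\<integral>\<^sup>+x. f (T x) \<partial>M) = (\<integral>\<^sup>+x. f x \<partial>M)"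
proof -
  have le: "(\<integral>\<^sup>+x. h (T x) \<partial>M) \<le> (\<integral>\<^sup>+x. h x \<partial>M)" for h :: "_ \<Rightarrow> ennreal"
    unfolding nn_integral_def[of M "\<lambda>x. h (T x)"]
  proof (rule SUP_least)
    fix g assume "g \<in> {g. simple_function M g \<and> g \<le> (\<lambda>x. h (T x))}"
    then have g: "simple_function M g" "\<And>x. g x \<le> h (T x)" by (auto simp: le_fun_def)
    have "integral\<^sup>S M g = (\<integral>\<^sup>+x. g x \<partial>distr M M T)"
      using nn_integral_eq_simple_integral[OF g(1)] D by simp
    also have "\<dots> = (\<integral>\<^sup>+x. g (T x) \<partial>M)"
      by (rule nn_integral_distr[OF T]) (use borel_measurable_simple_function[OF g(1)] in simp)
    also have "\<dots> \<le> (\<integral>\<^sup>+x. h x \<partial>M)"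
      by (rule nn_integral_mono) (use g(2) I in metis)
    finally show "integral\<^sup>S M g \<le> (\<integral>\<^sup>+x. h x \<partial>M)" .
  qed
  have "(\<integral>\<^sup>+x. f x \<partial>M) = (\<integral>\<^sup>+x. f (T (T x)) \<partial>M)"
    by (rule nn_integral_cong) (simp add: I)
  also have "\<dots> \<le> (\<integral>\<^sup>+x. f (T x) \<partial>M)" by (rule le)
  finally show ?thesis using le[of f] by (rule antisym[rotated])
qed

lemma
  fixes M :: "'b measure" and \<sigma> :: "'a \<Rightarrow> 'a"
  assumes I: "finite I" and M: "sigma_finite_measure M"
    and \<sigma>: "\<And>i. i \<in> I \<Longrightarrow> \<sigma> i \<in> I" "\<And>i. i \<in> I \<Longrightarrow> \<sigma> (\<sigma> i) = i"
  shows measurable_PiM_permute_coordinates: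
      "(\<lambda>x. \<lambda>i\<in>I. x (\<sigma> i)) \<in> measurable (PiM I (\<lambda>_. M)) (PiM I (\<lambda>_. M))"
    and distr_PiM_permute_coordinates:
      "distr (PiM I (\<lambda>_. M)) (PiM I (\<lambda>_. M)) (\<lambda>x. \<lambda>i\<in>I. x (\<sigma> i)) = PiM I (\<lambda>_. M)"
proof -
  let ?P = "PiM I (\<lambda>_. M)" and ?T = "\<lambda>x. \<lambda>i\<in>I. x (\<sigma> i)"
  show meas: "?T \<in> measurable ?P ?P"
    using \<sigma> by (intro measurable_restrict) auto
  interpret product_sigma_finite "\<lambda>_. M"
    using M by (simp add: product_sigma_finite_def)
  show "distr ?P ?P ?T = ?P"
  proof (rule PiM_eqI[OF I])
    fix A assume A: "\<And>i. i \<in> I \<Longrightarrow> A i \<in> sets M"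
    have "?T -` PiE I A \<inter> space ?P = PiE I (\<lambda>i. A (\<sigma> i))"
      using sets.sets_into_space[OF A] by (auto simp: space_PiM PiE_iff) (metis \<sigma> subsetD)+
    then have "distr ?P ?P ?T (PiE I A) = (\<Prod>i\<in>I. emeasure M (A (\<sigma> i)))"
      using A \<sigma> by (simp add: emeasure_distr[OF meas] sets_PiM_I_finite I emeasure_PiM)
    also have "\<dots> = (\<Prod>i\<in>I. emeasure M (A i))"
      by (rule prod.reindex_bij_witness[where i=\<sigma> and j=\<sigma>]) (use \<sigma> in auto)
    finally show "distr ?P ?P ?T (PiE I A) = (\<Prod>i\<in>I. emeasure M (A i))" .
  qed simp
qed

lemma all_less_reverse_index: "(\<forall>i<(n::nat). P (n - 1 - i)) \<longleftrightarrow> (\<forall>i<n. P i)"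
proof (intro iffI allI impI)
  fix i assume all: "\<forall>i<n. P (n - 1 - i)" and i: "i < n"
  have "n - 1 - i < n" using i by simp
  then have "P (n - 1 - (n - 1 - i))" using all by blast
  moreover have "n - 1 - (n - 1 - i) = i" using i by simp
  ultimately show "P i" by simp
qed simp

lemma svine_cdf_rev:
  assumes density_rev: "\<And>x. length x = length u \<Longrightarrow> set x \<subseteq> {0<..<1} \<Longrightarrow>
      svine_density C (rev x) = svine_density C x"
    and u: "set u \<subseteq> {0<..<1}"
  shows "svine_cdf C (rev u) = svine_cdf C u"
proof -
  define n where "n = length u"
  define P where "P = PiM {..<n} (\<lambda>_. lborel :: real measure)"
  define T where "T = (\<lambda>x::nat \<Rightarrow> real. \<lambda>i\<in>{..<n}. x (n - 1 - i))"
  define G where "G = (\<lambda>v x. indicator {x. \<forall>i<n. x i \<in> {0<..v ! i}} x *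
      ennreal (svine_density C (map x [0..<n])))"
  have T_measure: "T \<in> measurable P P" "distr P P T = P"
    unfolding P_def T_def
    by (auto intro!: measurable_PiM_permute_coordinates distr_PiM_permute_coordinates sigma_finite_lborel)
  have T_involution: "T (T x) = x" if "x \<in> space P" for x
    using that unfolding P_def T_def space_PiM by (auto simp: PiE_def extensional_def fun_eq_iff)
  have G_T: "G (rev u) (T x) = G u x" for x
  proof -
    have T_map: "map (T x) [0..<n] = rev (map x [0..<n])"
      by (rule nth_equalityI) (auto simp: T_def rev_nth)
    have box: "(\<forall>i<n. T x i \<in> {0<..rev u ! i}) \<longleftrightarrow> (\<forall>i<n. x i \<in> {0<..u ! i})"
      using all_less_reverse_index[of n "\<lambda>i. x i \<in> {0<..u ! i}"] unfolding T_def n_def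
      by (simp add: rev_nth)
    have "svine_density C (rev (map x [0..<n])) = svine_density C (map x [0..<n])"
      if "\<forall>i<n. x i \<in> {0<..u ! i}"
    proof (rule density_rev)
      show "set (map x [0..<n]) \<subseteq> {0<..<1}"
        using that u unfolding n_def by (force dest: nth_mem)
    qed (simp add: n_def)
    then show ?thesis
      unfolding G_def T_map using box by (simp add: indicator_def)
  qed
  have "svine_cdf C (rev u) = (\<integral>\<^sup>+x. G (rev u) x \<partial>P)"
    unfolding svine_cdf_def G_def P_def n_def by simp
  also have "\<dots> = (\<integral>\<^sup>+x. G (rev u) (T x) \<partial>P)"
    using nn_integral_involution[OF T_measure T_involution] by simp
  also have "\<dots> = svine_cdf C u"
    unfolding G_T by (simp add: svine_cdf_def G_def P_def n_def)
  finally show ?thesis .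
qed

theorem proposition3p1:
  fixes C :: "nat \<Rightarrow> real \<Rightarrow> real \<Rightarrow> real"
  assumes copula: "\<forall>k\<ge>1. is_copula2 (C k)"
    and smooth: "\<forall>k\<ge>1. smooth_on_unit_sq (C k)"
    and dens_pos: "\<forall>k\<ge>1. \<forall>u\<in>{0<..<1}. \<forall>v\<in>{0<..<1}. copula_density (C k) u v > 0"
    and exch: "\<forall>k\<ge>1. \<forall>u\<in>{0<..<1}. \<forall>v\<in>{0<..<1}. C k u v = C k v u"
  shows "(\<forall>k\<ge>1. \<forall>u x. length u = k \<and> set u \<subseteq> {0<..<1} \<and> x \<in> {0<..<1} \<longrightarrow>
            rosen C False k (rev u) x = rosen C True k u x)
       \<and> (\<forall>n\<ge>2. \<forall>u. length u = n \<and> set u \<subseteq> {0<..<1} \<longrightarrow>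
            svine_cdf C u = svine_cdf C (rev u))"
proof -
  have exchangeable: "exchangeable_copula (C k)" if "k \<ge> 1" for k
    using copula smooth dens_pos exch that
    by (simp add: exchangeable_copula_def exchangeable_copula_axioms_def smooth_copula_def
        smooth_copula_axioms_def copula2_def)
  show ?thesis
  proof (intro conjI allI impI)
    fix k :: nat and u :: "real list" and x :: real
    assume "length u = k \<and> set u \<subseteq> {0<..<1} \<and> x \<in> {0<..<1}"
    then show "rosen C False k (rev u) x = rosen C True k u x"
      using rosen_rev[of C, OF exchangeable] by blast
  next
    fix n :: nat and u :: "real list"
    assume "length u = n \<and> set u \<subseteq> {0<..<1}"
    then show "svine_cdf C u = svine_cdf C (rev u)"
      using svine_density_rev[of C, OF exchangeable] by (auto intro!: svine_cdf_rev[symmetric])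
  qed
qed

end
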